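(* Let $\mathbb{N}$ be the natural numbers with the usual order and $\Sigma\mathbb{N}$ its Scott space (whose nonempty open sets are exactly the sets ${\uparrow}k$, $k\in\mathbb{N}$). Then $\Sigma\mathbb{N}$ is $S^{\ast}$-well-filtered but not well-filtered (hence not strongly well-filtered).
   Context: All spaces are $T_0$. The specialization order of $X$ is given by $x\le y$ iff $x\in cl(\{y\})$; ${\uparrow}$ is taken with respect to it; a subset is saturated if it is an upper set in the specialization order. $K(X)$ denotes the set of all nonempty compact saturated subsets of $X$; a family in $K(X)$ is filtered if any two members contain a common member. $X$ is well-filtered if for every filtered family $\{K_i\}\subseteq K(X)$ and every open $U$, $\bigcap_i K_i\subseteq U$ implies $K_i\subseteq U$ for some $i$. $X$ is strongly well-filtered if for every filtered $\{K_i\mid i\in I\}\subseteq K(X)$, every $G\in K(X)$ and every open $U$, $\bigcap_i K_i\cap G\subseteq U$ implies $K_i\cap G\subseteq U$ for some $i$. $X$ is $S^{\ast}$-well-filtered if this last implication holds for every nonempty open $U$. *)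

theory Defs
  imports "HOL-Analysis.Analysis"
begin

definition directed_set :: "'a::order set \<Rightarrow> bool" where
  "directed_set D \<longleftrightarrow> D \<noteq> {} \<and> (\<forall>x\<in>D. \<forall>y\<in>D. \<exists>z\<in>D. x \<le> z \<and> y \<le> z)"

definition is_lub :: "'a::order set \<Rightarrow> 'a \<Rightarrow> bool" where
  "is_lub D s \<longleftrightarrow> (\<forall>x\<in>D. x \<le> s) \<and> (\<forall>t. (\<forall>x\<in>D. x \<le> t) \<longrightarrow> s \<le> t)"

definition scott_open :: "'a::order set \<Rightarrow> bool" where
  "scott_open U \<longleftrightarrow> (\<forall>x y. x \<in> U \<and> x \<le> y \<longrightarrow> y \<in> U) \<and>
     (\<forall>D s. directed_set D \<and> is_lub D s \<and> s \<in> U \<longrightarrow> D \<inter> U \<noteq> {})"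

definition scott_topology :: "'a::order topology" where
  "scott_topology = topology scott_open"

definition spec_le :: "'a topology \<Rightarrow> 'a \<Rightarrow> 'a \<Rightarrow> bool" where
  "spec_le X x y \<longleftrightarrow> x \<in> X closure_of {y}"

definition saturated :: "'a topology \<Rightarrow> 'a set \<Rightarrow> bool" where
  "saturated X A \<longleftrightarrow> A \<subseteq> topspace X \<and>
     (\<forall>x y. x \<in> A \<and> y \<in> topspace X \<and> spec_le X x y \<longrightarrow> y \<in> A)"

definition KX :: "'a topology \<Rightarrow> 'a set set" where
  "KX X = {K. K \<noteq> {} \<and> compactin X K \<and> saturated X K}"

definition filtered_KX :: "'a topology \<Rightarrow> 'a set set \<Rightarrow> bool" where
  "filtered_KX X F \<longleftrightarrow> F \<noteq> {} \<and> F \<subseteq> KX X \<and>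
     (\<forall>A\<in>F. \<forall>B\<in>F. \<exists>C\<in>F. C \<subseteq> A \<and> C \<subseteq> B)"

definition well_filtered :: "'a topology \<Rightarrow> bool" where
  "well_filtered X \<longleftrightarrow> (\<forall>F U. filtered_KX X F \<and> openin X U \<and> \<Inter>F \<subseteq> U
     \<longrightarrow> (\<exists>K\<in>F. K \<subseteq> U))"

definition strongly_well_filtered :: "'a topology \<Rightarrow> bool" where
  "strongly_well_filtered X \<longleftrightarrow> (\<forall>F G U. filtered_KX X F \<and> G \<in> KX X \<and> openin X U
     \<and> \<Inter>F \<inter> G \<subseteq> U \<longrightarrow> (\<exists>K\<in>F. K \<inter> G \<subseteq> U))"

definition S_star_well_filtered :: "'a topology \<Rightarrow> bool" where
  "S_star_well_filtered X \<longleftrightarrow> (\<forall>F G U. filtered_KX X F \<and> G \<in> KX X \<and> openin X U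
     \<and> U \<noteq> {} \<and> \<Inter>F \<inter> G \<subseteq> U \<longrightarrow> (\<exists>K\<in>F. K \<inter> G \<subseteq> U))"

end

theory Submission
  imports Defs
begin

text \<open>
  In \<open>\<Sigma>\<nat>\<close> the open sets and the saturated sets are exactly the upper sets,
  and every nonempty upper set is some \<open>{m..}\<close>.
  If \<open>\<Inter>F \<inter> G \<subseteq> {m..}\<close> with \<open>m = Suc p\<close>, then \<open>p\<close> is missing from \<open>G\<close> or
  from some \<open>K \<in> F\<close>, and an upper set missing \<open>p\<close> lies inside \<open>{m..}\<close>.
  This fails for the empty open set: the filtered family \<open>{k..}\<close> has empty
  intersection although none of its members is empty. Strong well-filteredness
  implies well-filteredness in any space, by taking \<open>G\<close> to be a member of the family.
\<close>

definition upward_closed :: "'a::order set \<Rightarrow> bool" where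
  "upward_closed A \<longleftrightarrow> (\<forall>x y. x \<in> A \<and> x \<le> y \<longrightarrow> y \<in> A)"

lemma upward_closed_atLeast [simp]: "upward_closed {x..}"
  unfolding upward_closed_def by auto

lemma scott_open_Int:
  assumes U: "scott_open U" and V: "scott_open V"
  shows "scott_open (U \<inter> V)"
proof -
  have "D \<inter> (U \<inter> V) \<noteq> {}" if D: "directed_set D" "is_lub D s" "s \<in> U \<inter> V" for D s
  proof -
    obtain u v where "u \<in> D \<inter> U" "v \<in> D \<inter> V"
      using U V D unfolding scott_open_def by blast
    moreover obtain z where "z \<in> D" "u \<le> z" "v \<le> z"
      using D(1) \<open>u \<in> D \<inter> U\<close> \<open>v \<in> D \<inter> V\<close> unfolding directed_set_def by blast
    ultimately show ?thesis
      using U V unfolding scott_open_def by blast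
  qed
  with U V show ?thesis
    unfolding scott_open_def by blast
qed

lemma istopology_scott_open: "istopology (scott_open :: 'a::order set \<Rightarrow> bool)"
  unfolding istopology_def
proof (intro conjI ballI allI impI)
  show "scott_open (U \<inter> V)" if "scott_open U" "scott_open V" for U V :: "'a set"
    using that by (rule scott_open_Int)
  show "scott_open (\<Union>\<K>)" if "\<forall>K\<in>\<K>. scott_open K" for \<K> :: "'a set set"
    using that unfolding scott_open_def by blast
qed

lemma openin_scott_topology: "openin scott_topology = scott_open"
  unfolding scott_topology_def by (simp add: istopology_scott_open)

lemma scott_open_imp_upward_closed: "scott_open U \<Longrightarrow> upward_closed U"
  unfolding scott_open_def upward_closed_def by blast

lemma scott_open_UNIV: "scott_open UNIV"
  unfolding scott_open_def directed_set_def by simp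

lemma topspace_scott_topology [simp]: "topspace scott_topology = UNIV"
  using openin_subset[of scott_topology UNIV] by (auto simp: openin_scott_topology scott_open_UNIV)

lemma scott_open_not_atMost: "scott_open (- {..y})"
  unfolding scott_open_def is_lub_def by (metis ComplD ComplI IntI atMost_iff empty_iff order_trans)

lemma spec_le_scott_topology: "spec_le scott_topology x y \<longleftrightarrow> x \<le> y"
proof
  assume "spec_le scott_topology x y"
  then have "\<forall>T. x \<in> T \<and> scott_open T \<longrightarrow> y \<in> T"
    unfolding spec_le_def in_closure_of openin_scott_topology by auto
  then show "x \<le> y"
    using scott_open_not_atMost[of y] by (metis ComplD ComplI atMost_iff order_refl)
next
  assume "x \<le> y"
  then show "spec_le scott_topology x y"
    unfolding spec_le_def in_closure_of openin_scott_topology scott_open_def by auto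
qed

lemma saturated_scott_topology: "saturated scott_topology K \<longleftrightarrow> upward_closed K"
  unfolding saturated_def upward_closed_def by (simp add: spec_le_scott_topology)

lemma compactin_scott_atLeast: "compactin scott_topology {x..}"
  unfolding compactin_def
proof (intro conjI allI impI)
  fix \<U> assume \<U>: "(\<forall>V\<in>\<U>. openin scott_topology V) \<and> {x..} \<subseteq> \<Union>\<U>"
  then obtain V where "V \<in> \<U>" "x \<in> V"
    by auto
  moreover have "upward_closed V"
    using \<U> \<open>V \<in> \<U>\<close> by (simp add: openin_scott_topology scott_open_imp_upward_closed)
  then have "{x..} \<subseteq> V"
    using \<open>x \<in> V\<close> by (auto simp: upward_closed_def)
  ultimately show "\<exists>\<F>. finite \<F> \<and> \<F> \<subseteq> \<U> \<and> {x..} \<subseteq> \<Union>\<F>"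
    by (intro exI[of _ "{V}"]) auto
qed simp

lemma atLeast_in_KX_scott: "{x..} \<in> KX scott_topology"
  unfolding KX_def by (auto simp: compactin_scott_atLeast saturated_scott_topology)

lemma filtered_KX_scott_atLeast:
  "filtered_KX (scott_topology :: 'a::linorder topology) (range atLeast)"
  unfolding filtered_KX_def
proof (intro conjI ballI)
  fix A B :: "'a set" assume "A \<in> range (atLeast :: 'a \<Rightarrow> 'a set)" "B \<in> range atLeast"
  then obtain a b where "A = {a..}" "B = {b..}"
    by auto
  then show "\<exists>C\<in>range atLeast. C \<subseteq> A \<and> C \<subseteq> B"
    by (intro bexI[of _ "{max a b..}"]) auto
qed (auto simp: atLeast_in_KX_scott)

lemma not_well_filtered_scott: "\<not> well_filtered (scott_topology :: 'a::{linorder,no_top} topology)"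
proof
  assume wf: "well_filtered (scott_topology :: 'a topology)"
  have "x \<notin> \<Inter> (range atLeast)" for x :: 'a
    using gt_ex[of x] by (auto simp: not_le)
  then have "\<Inter> (range atLeast) = ({} :: 'a set)"
    by blast
  moreover have "openin scott_topology ({} :: 'a set)"
    by (simp add: openin_scott_topology scott_open_def)
  ultimately have "\<exists>K\<in>range atLeast. K \<subseteq> ({} :: 'a set)"
    using wf[unfolded well_filtered_def, rule_format, of "range atLeast" "{}"]
      filtered_KX_scott_atLeast by simp
  then show False
    by auto
qed

lemma strongly_well_filtered_imp_well_filtered:
  assumes swf: "strongly_well_filtered X"
  shows "well_filtered X"
  unfolding well_filtered_def
proof (intro allI impI)
  fix F U assume FU: "filtered_KX X F \<and> openin X U \<and> \<Inter>F \<subseteq> U"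
  then have F: "F \<noteq> {}" "F \<subseteq> KX X" "\<And>A B. A \<in> F \<Longrightarrow> B \<in> F \<Longrightarrow> \<exists>C\<in>F. C \<subseteq> A \<and> C \<subseteq> B"
    unfolding filtered_KX_def by auto
  then obtain G where "G \<in> F"
    by auto
  then have "G \<in> KX X" "\<Inter>F \<inter> G \<subseteq> U"
    using F(2) FU by auto
  then have "\<exists>K\<in>F. K \<inter> G \<subseteq> U"
    using swf FU unfolding strongly_well_filtered_def by simp
  then obtain K where "K \<in> F" "K \<inter> G \<subseteq> U"
    by auto
  moreover obtain C where "C \<in> F" "C \<subseteq> K" "C \<subseteq> G"
    using F(3)[OF \<open>K \<in> F\<close> \<open>G \<in> F\<close>] by blast
  ultimately show "\<exists>K\<in>F. K \<subseteq> U"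
    by auto
qed

lemma is_lub_nat_mem:
  assumes "D \<noteq> {}" "is_lub D (s::nat)"
  shows "s \<in> D"
proof -
  have "finite D"
    using assms(2) finite_subset[of D "{..s}"] unfolding is_lub_def by auto
  with assms have "s \<le> Max D" "Max D \<le> s" "Max D \<in> D"
    unfolding is_lub_def by simp_all
  then show ?thesis
    by simp
qed

lemma openin_scott_nat: "openin scott_topology (U::nat set) \<longleftrightarrow> upward_closed U"
  unfolding openin_scott_topology scott_open_def upward_closed_def directed_set_def
  using is_lub_nat_mem by blast

lemma upward_closed_nat_eq_atLeast:
  assumes "upward_closed (U::nat set)" "U \<noteq> {}"
  obtains m where "U = {m..}"
proof
  show "U = {LEAST m. m \<in> U..}"
    using assms unfolding upward_closed_def by (metis Least_le LeastI atLeast_iff equals0I subsetI subset_antisym)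
qed

lemma upward_closed_nat_subset_atLeast_Suc:
  "upward_closed (A::nat set) \<Longrightarrow> p \<notin> A \<Longrightarrow> A \<subseteq> {Suc p..}"
  unfolding upward_closed_def by (metis atLeast_iff not_less_eq_eq subsetI)

lemma S_star_well_filtered_scott_nat: "S_star_well_filtered (scott_topology :: nat topology)"
  unfolding S_star_well_filtered_def
proof (intro allI impI)
  fix F G U
  assume asm: "filtered_KX (scott_topology::nat topology) F \<and> G \<in> KX scott_topology \<and>
    openin scott_topology U \<and> U \<noteq> {} \<and> \<Inter> F \<inter> G \<subseteq> U"
  then have "F \<noteq> {}" and F: "\<And>K. K \<in> F \<Longrightarrow> upward_closed K" and "upward_closed G"
    by (auto simp: filtered_KX_def KX_def saturated_scott_topology)
  obtain m where U: "U = {m..}"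
    using asm upward_closed_nat_eq_atLeast by (auto simp: openin_scott_nat)
  show "\<exists>K\<in>F. K \<inter> G \<subseteq> U"
  proof (cases m)
    case 0
    then show ?thesis
      using \<open>F \<noteq> {}\<close> U by auto
  next
    case (Suc p)
    then have "p \<notin> G \<or> (\<exists>K\<in>F. p \<notin> K)"
      using asm U by auto
    then show ?thesis
      using \<open>F \<noteq> {}\<close> \<open>upward_closed G\<close> F U Suc upward_closed_nat_subset_atLeast_Suc by blast
  qed
qed

theorem mainTheorem9:
  shows "S_star_well_filtered (scott_topology :: nat topology) \<and>
         \<not> well_filtered (scott_topology :: nat topology) \<and>
         \<not> strongly_well_filtered (scott_topology :: nat topology)"
  using S_star_well_filtered_scott_nat not_well_filtered_scott
    strongly_well_filtered_imp_well_filtered by blast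

end
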